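(* Let $T,S>0$. The concatenation map $\theta:\mathcal C_0([0,T],\mathfrak a)\otimes\mathcal C_0([0,S],\mathfrak a)\to\mathcal C_0([0,T+S],\mathfrak a)$, $\pi_1\otimes\pi_2\mapsto\pi_1\ast\pi_2$, is a crystal isomorphism. More precisely, for all $\pi_1,\pi_2$, $\alpha\in\Delta$ and $c\in\mathbb R$: (i) $\gamma(\pi_1\ast\pi_2)=\gamma(\pi_1\otimes\pi_2)$; (ii) $\varepsilon_\alpha(\pi_1\ast\pi_2)=\varepsilon_\alpha(\pi_1\otimes\pi_2)$ (equivalently $\varphi_\alpha(\pi_1\ast\pi_2)=\varphi_\alpha(\pi_1\otimes\pi_2)$); (iii) $e^c_\alpha\cdot(\pi_1\ast\pi_2)=\theta(e^c_\alpha\cdot(\pi_1\otimes\pi_2))$.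
   Context: $\mathfrak a$ is the real Cartan subalgebra of a complex semisimple Lie algebra, $\Delta$ its simple roots, $\alpha^\vee$ the coroot of $\alpha$. For $T>0$, $\mathcal C_0([0,T],\mathfrak a)$ (continuous paths with $\pi(0)=0$) carries the geometric crystal structure: $\gamma(\pi)=\pi(T)$, $\varepsilon_\alpha(\pi)=\log\int_0^Te^{-\alpha(\pi(s))}ds$, $\varphi_\alpha(\pi)=\alpha(\pi(T))+\varepsilon_\alpha(\pi)$, $(e^c_\alpha\cdot\pi)(t)=\pi(t)+\log\big(1+(e^c-1)e^{-\varepsilon_\alpha(\pi)}\int_0^te^{-\alpha(\pi(s))}ds\big)\alpha^\vee$. The tensor product $X\otimes Y$ of two such crystals is $X\times Y$ with $\gamma(x\otimes y)=\gamma(x)+\gamma(y)$, $\varepsilon_\alpha(x\otimes y)=\varepsilon_\alpha(x)+\log(1+e^{\varepsilon_\alpha(y)-\varphi_\alpha(x)})$, $\varphi_\alpha(x\otimes y)=\varphi_\alpha(y)+\log(1+e^{\varphi_\alpha(x)-\varepsilon_\alpha(y)})$, $e^c_\alpha(x\otimes y)=e^{c_1}_\alpha x\otimes e^{c_2}_\alpha y$ with $e^{c_1}=\frac{e^{c+\varphi_\alpha(x)}+e^{\varepsilon_\alpha(y)}}{e^{\varphi_\alpha(x)}+e^{\varepsilon_\alpha(y)}}$, $e^{c_2}=\frac{e^{\varphi_\alpha(x)}+e^{\varepsilon_\alpha(y)}}{e^{\varphi_\alpha(x)}+e^{-c+\varepsilon_\alpha(y)}}$. Concatenation: $(\pi_1\ast\pi_2)(t)=\pi_1(t)$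 for $0\le t\le T$ and $\pi_1(T)+\pi_2(t-T)$ for $T\le t\le T+S$. A crystal isomorphism is a bijection preserving $\gamma,\varepsilon_\alpha,\varphi_\alpha$ and commuting with all $e^c_\alpha$, whose inverse has the same properties. *)

theory Defs
  imports "HOL-Analysis.Analysis"
begin

text \<open>The Cartan subalgebra is modelled by a finite-dimensional real inner product
space 'a; a simple root alpha is a linear functional on 'a and its coroot
av is a vector with alpha av = 2.  Paths on [0,T] are functions real => 'a,
continuous on [0,T], vanishing at 0, and extensional (undefined outside [0,T]).\<close>

definition C0 :: "real \<Rightarrow> (real \<Rightarrow> 'a::euclidean_space) set" where
  "C0 T = {\<pi>. continuous_on {0..T} \<pi> \<and> \<pi> 0 = 0 \<and> \<pi> \<in> extensional {0..T}}"

definition cgamma :: "real \<Rightarrow> (real \<Rightarrow> 'a::euclidean_space) \<Rightarrow> 'a" where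
  "cgamma T \<pi> = \<pi> T"

definition ceps :: "('a::euclidean_space \<Rightarrow> real) \<Rightarrow> real \<Rightarrow> (real \<Rightarrow> 'a) \<Rightarrow> real" where
  "ceps \<alpha> T \<pi> = ln (integral {0..T} (\<lambda>s. exp (- \<alpha> (\<pi> s))))"

definition cphi :: "('a::euclidean_space \<Rightarrow> real) \<Rightarrow> real \<Rightarrow> (real \<Rightarrow> 'a) \<Rightarrow> real" where
  "cphi \<alpha> T \<pi> = \<alpha> (\<pi> T) + ceps \<alpha> T \<pi>"

definition cact :: "('a::euclidean_space \<Rightarrow> real) \<Rightarrow> 'a \<Rightarrow> real \<Rightarrow> real \<Rightarrow> (real \<Rightarrow> 'a) \<Rightarrow> (real \<Rightarrow> 'a)" where
  "cact \<alpha> av T c \<pi> = (\<lambda>t\<in>{0..T}. \<pi> t +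
      ln (1 + (exp c - 1) * exp (- ceps \<alpha> T \<pi>) * integral {0..t} (\<lambda>s. exp (- \<alpha> (\<pi> s)))) *\<^sub>R av)"

definition tgamma :: "real \<Rightarrow> real \<Rightarrow> (real \<Rightarrow> 'a::euclidean_space) \<Rightarrow> (real \<Rightarrow> 'a) \<Rightarrow> 'a" where
  "tgamma T S x y = cgamma T x + cgamma S y"

definition teps :: "('a::euclidean_space \<Rightarrow> real) \<Rightarrow> real \<Rightarrow> real \<Rightarrow> (real \<Rightarrow> 'a) \<Rightarrow> (real \<Rightarrow> 'a) \<Rightarrow> real" where
  "teps \<alpha> T S x y = ceps \<alpha> T x + ln (1 + exp (ceps \<alpha> S y - cphi \<alpha> T x))"

definition tphi :: "('a::euclidean_space \<Rightarrow> real) \<Rightarrow> real \<Rightarrow> real \<Rightarrow> (real \<Rightarrow> 'a) \<Rightarrow> (real \<Rightarrow> 'a) \<Rightarrow> real" where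
  "tphi \<alpha> T S x y = cphi \<alpha> S y + ln (1 + exp (cphi \<alpha> T x - ceps \<alpha> S y))"

definition tact :: "('a::euclidean_space \<Rightarrow> real) \<Rightarrow> 'a \<Rightarrow> real \<Rightarrow> real \<Rightarrow> real \<Rightarrow> (real \<Rightarrow> 'a) \<Rightarrow> (real \<Rightarrow> 'a)
      \<Rightarrow> (real \<Rightarrow> 'a) \<times> (real \<Rightarrow> 'a)" where
  "tact \<alpha> av T S c x y =
     (let c1 = ln ((exp (c + cphi \<alpha> T x) + exp (ceps \<alpha> S y)) / (exp (cphi \<alpha> T x) + exp (ceps \<alpha> S y)));
          c2 = ln ((exp (cphi \<alpha> T x) + exp (ceps \<alpha> S y)) / (exp (cphi \<alpha> T x) + exp (- c + ceps \<alpha> S y)))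
      in (cact \<alpha> av T c1 x, cact \<alpha> av S c2 y))"

definition pconcat :: "real \<Rightarrow> real \<Rightarrow> (real \<Rightarrow> 'a::euclidean_space) \<Rightarrow> (real \<Rightarrow> 'a) \<Rightarrow> (real \<Rightarrow> 'a)" where
  "pconcat T S p1 p2 = (\<lambda>t\<in>{0..T+S}. if t \<le> T then p1 t else p1 T + p2 (t - T))"

end

theory Submission imports Defs begin

(* Write F(t) = int_0^t exp(-alpha(pi s)) ds.  Then eps_alpha(pi) = log F(T), and e^c_alpha moves
   pi(t) along the coroot by log (1 + (e^c - 1) F(t) / F(T)), so everything is governed by the
   normalised weight F(t) / F(T).  For pi1 * pi2 the weight splits as F(t) = F1(t) before T and
   F(t) = F1(T) + exp(-alpha(pi1 T)) F2(t - T) after T.  With x = exp(phi_alpha pi1) and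
   y = exp(eps_alpha pi2) the normalised weight of the concatenation is therefore
   x/(x+y) * F1(t)/F1(T) before T and (x + y F2(t-T)/F2(S)) / (x+y) after T, and all claims become
   identities between positive reals in x, y and these ratios; on [T, T+S] the action of c splits
   into the actions of c1 on pi1 and c2 on pi2 because the factor (e^c x + y)/(x+y) = e^c1 peels off. *)

lemma ln_one_plus_exp: "ln (1 + exp u) = u + ln (1 + exp (- u :: real))"
proof -
  have "1 + exp u = exp u * (1 + exp (- u))"
    by (simp add: distrib_left exp_minus_inverse)
  moreover have "0 < 1 + exp (- u)"
    by (simp add: add_pos_pos)
  ultimately show ?thesis
    by (simp add: ln_mult)
qed

lemma ln_exp_add_exp: "ln (exp u + exp v) = u + ln (1 + exp (v - u :: real))"
proof -
  have "exp u + exp v = exp u * (1 + exp (v - u))"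
    by (simp add: distrib_left mult_exp_exp)
  moreover have "0 < 1 + exp (v - u)"
    by (simp add: add_pos_pos)
  ultimately show ?thesis
    by (simp add: ln_mult)
qed

lemma ln_tensor_action_factor:
  fixes x y e r :: real
  assumes "0 < x" "0 < y" "0 < e" "0 \<le> r" "r \<le> 1"
  shows "ln ((e * x + y) / (x + y)) + ln (1 + ((x + y) / (x + y / e) - 1) * r)
    = ln (1 + (e - 1) * ((x + y * r) / (x + y)))"
proof -
  define N where "N = e * x + y * (1 - r) + e * y * r"
  have pos: "0 < e * x + y" "0 < x + y" "0 < N"
    using assms by (auto simp: N_def intro!: add_pos_pos add_pos_nonneg)
  have factor2: "1 + ((x + y) / (x + y / e) - 1) * r = N / (e * x + y)"
    using assms pos(1) by (simp add: N_def field_simps)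
  have "ln ((e * x + y) / (x + y)) + ln (1 + ((x + y) / (x + y / e) - 1) * r)
      = ln ((e * x + y) / (x + y) * (N / (e * x + y)))"
    unfolding factor2 using pos by (intro ln_mult_pos[symmetric] divide_pos_pos)
  also have "\<dots> = ln (N / (x + y))"
    using pos by simp
  also have "N / (x + y) = 1 + (e - 1) * ((x + y * r) / (x + y))"
    using pos(2) by (simp add: N_def field_simps)
  finally show ?thesis .
qed

lemma integral_pos_continuous:
  fixes g :: "real \<Rightarrow> real"
  assumes "0 < T" "continuous_on {0..T} g" "\<And>s. s \<in> {0..T} \<Longrightarrow> 0 < g s"
  shows "0 < integral {0..T} g"
proof -
  obtain m where m: "m \<in> {0..T}" "\<forall>s\<in>{0..T}. g m \<le> g s"
    using continuous_attains_inf[of "{0..T}" g] assms by auto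
  have "0 < T * g m" using assms m by simp
  also have "\<dots> = integral {0..T} (\<lambda>_. g m)" using assms by simp
  also have "\<dots> \<le> integral {0..T} g"
    using m assms by (intro integral_le) (auto intro: integrable_continuous_interval)
  finally show ?thesis .
qed

definition exp_integral :: "('a::euclidean_space \<Rightarrow> real) \<Rightarrow> (real \<Rightarrow> 'a) \<Rightarrow> real \<Rightarrow> real" where
  "exp_integral \<alpha> \<pi> t = integral {0..t} (\<lambda>s. exp (- \<alpha> (\<pi> s)))"

lemma continuous_on_exp_neg_linear:
  assumes "continuous_on A \<pi>" "linear (\<alpha>::'a::euclidean_space \<Rightarrow> real)"
  shows "continuous_on A (\<lambda>s. exp (- \<alpha> (\<pi> s)))"
proof -
  have "continuous_on A (\<alpha> \<circ> \<pi>)"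
    using assms by (intro continuous_on_compose continuous_on_subset[OF linear_continuous_on])
      (auto simp: linear_conv_bounded_linear)
  then show ?thesis
    using continuous_on_exp[OF continuous_on_minus] by (simp add: o_def)
qed

lemma exp_integral_pos:
  assumes "0 < T" "continuous_on {0..T} \<pi>" "linear \<alpha>"
  shows "0 < exp_integral \<alpha> \<pi> T"
  unfolding exp_integral_def
  using assms by (intro integral_pos_continuous continuous_on_exp_neg_linear) auto

lemma exp_integral_bounds:
  assumes "0 \<le> t" "t \<le> T" "continuous_on {0..T} \<pi>" "linear \<alpha>"
  shows "0 \<le> exp_integral \<alpha> \<pi> t" "exp_integral \<alpha> \<pi> t \<le> exp_integral \<alpha> \<pi> T"
proof -
  have "continuous_on {0..t} (\<lambda>s. exp (- \<alpha> (\<pi> s)))"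
    using assms by (intro continuous_on_exp_neg_linear) (auto intro: continuous_on_subset)
  then have "(\<lambda>s. exp (- \<alpha> (\<pi> s))) integrable_on {0..t}"
    by (rule integrable_continuous_interval)
  moreover have "(\<lambda>s. exp (- \<alpha> (\<pi> s))) integrable_on {0..T}"
    using assms by (intro integrable_continuous_interval continuous_on_exp_neg_linear)
  ultimately show "0 \<le> exp_integral \<alpha> \<pi> t" "exp_integral \<alpha> \<pi> t \<le> exp_integral \<alpha> \<pi> T"
    unfolding exp_integral_def using assms by (auto intro: integral_nonneg integral_subset_le)
qed

lemma ceps_eq_ln_exp_integral: "ceps \<alpha> T \<pi> = ln (exp_integral \<alpha> \<pi> T)"
  by (simp add: ceps_def exp_integral_def)

lemma cact_apply:
  assumes "t \<in> {0..T}" "0 < exp_integral \<alpha> \<pi> T"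
  shows "cact \<alpha> av T c \<pi> t
    = \<pi> t + ln (1 + (exp c - 1) * (exp_integral \<alpha> \<pi> t / exp_integral \<alpha> \<pi> T)) *\<^sub>R av"
  using assms by (simp add: cact_def ceps_eq_ln_exp_integral exp_minus exp_integral_def divide_inverse ac_simps)

lemma tact_eq:
  "tact \<alpha> av T S c p1 p2 =
    (cact \<alpha> av T (ln ((exp c * exp (cphi \<alpha> T p1) + exp (ceps \<alpha> S p2))
                     / (exp (cphi \<alpha> T p1) + exp (ceps \<alpha> S p2)))) p1,
     cact \<alpha> av S (ln ((exp (cphi \<alpha> T p1) + exp (ceps \<alpha> S p2))
                     / (exp (cphi \<alpha> T p1) + exp (ceps \<alpha> S p2) / exp c))) p2)"
  by (simp add: tact_def exp_add exp_diff mult.commute)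

lemma pconcat_apply_le: "0 \<le> S \<Longrightarrow> t \<in> {0..T} \<Longrightarrow> pconcat T S p1 p2 t = p1 t"
  by (simp add: pconcat_def)

lemma pconcat_apply_ge:
  "0 \<le> T \<Longrightarrow> T < t \<Longrightarrow> t \<le> T + S \<Longrightarrow> pconcat T S p1 p2 t = p1 T + p2 (t - T)"
  by (simp add: pconcat_def)

lemma continuous_on_pconcat:
  assumes "0 \<le> T" "0 \<le> S" "continuous_on {0..T} p1" "continuous_on {0..S} p2" "p2 0 = 0"
  shows "continuous_on {0..T+S} (pconcat T S p1 p2)"
proof -
  have "continuous_on {T..T+S} (p2 \<circ> (\<lambda>t. t - T))"
    using assms by (intro continuous_on_compose continuous_intros) (auto intro: continuous_on_subset)
  then have "continuous_on {T..T+S} (\<lambda>t. p1 T + p2 (t - T))"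
    using continuous_on_add[OF continuous_on_const] by (simp add: o_def)
  then have "continuous_on {0..T+S} (\<lambda>t. if t \<le> T then p1 t else p1 T + p2 (t - T))"
    using assms by (intro continuous_on_cases_le[where h = id, simplified])
      (auto intro: continuous_on_subset)
  then show ?thesis
    by (rule continuous_on_eq) (auto simp: pconcat_def)
qed

lemma pconcat_in_C0:
  assumes "0 \<le> T" "0 \<le> S" "p1 \<in> C0 T" "p2 \<in> C0 S"
  shows "pconcat T S p1 p2 \<in> C0 (T + S)"
  using assms continuous_on_pconcat[OF assms(1,2)] by (auto simp: C0_def pconcat_def)

lemma pconcat_inject:
  assumes "0 \<le> T" "0 \<le> S" "p1 \<in> C0 T" "p2 \<in> C0 S" "q1 \<in> C0 T" "q2 \<in> C0 S"
    and eq: "pconcat T S p1 p2 = pconcat T S q1 q2"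
  shows "p1 = q1 \<and> p2 = q2"
proof
  have "p1 t = q1 t" if "t \<in> {0..T}" for t
    using fun_cong[OF eq, of t] that assms(2) by (auto simp: pconcat_def C0_def)
  then show "p1 = q1"
    using assms by (intro extensionalityI[of _ "{0..T}"]) (auto simp: C0_def)
  moreover have "p2 u = q2 u" if "u \<in> {0..S}" for u
  proof (cases "u = 0")
    case True
    then show ?thesis using assms(4,6) by (simp add: C0_def)
  next
    case False
    then show ?thesis
      using fun_cong[OF eq, of "T + u"] that assms(1) \<open>p1 = q1\<close> by (simp add: pconcat_def)
  qed
  ultimately show "p2 = q2"
    using assms by (intro extensionalityI[of _ "{0..S}"]) (auto simp: C0_def)
qed

lemma pconcat_split:
  assumes "0 \<le> T" "0 \<le> S" "q \<in> C0 (T + S)"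
  shows "q = pconcat T S (restrict q {0..T}) (restrict (\<lambda>u. q (T + u) - q T) {0..S})"
    and "restrict q {0..T} \<in> C0 T"
    and "restrict (\<lambda>u. q (T + u) - q T) {0..S} \<in> C0 S"
proof -
  have cq: "continuous_on {0..T+S} q" using assms by (simp add: C0_def)
  show "q = pconcat T S (restrict q {0..T}) (restrict (\<lambda>u. q (T + u) - q T) {0..S})"
    using assms by (auto simp: pconcat_def C0_def extensional_def fun_eq_iff)
  have "continuous_on {0..T} (restrict q {0..T})"
    by (rule continuous_on_eq[OF continuous_on_subset[OF cq]]) (use assms in auto)
  then show "restrict q {0..T} \<in> C0 T"
    using assms by (simp add: C0_def)
  have "continuous_on {0..S} (q \<circ> (\<lambda>u. T + u))"
    using assms by (intro continuous_on_compose continuous_intros continuous_on_subset[OF cq]) auto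
  then have "continuous_on {0..S} (\<lambda>u. q (T + u) - q T)"
    unfolding o_def by (intro continuous_on_diff continuous_on_const)
  then show "restrict (\<lambda>u. q (T + u) - q T) {0..S} \<in> C0 S"
    using assms by (auto simp: C0_def intro: continuous_on_eq)
qed

lemma bij_betw_pconcat:
  assumes "0 \<le> T" "0 \<le> S"
  shows "bij_betw (\<lambda>(p1, p2). pconcat T S p1 p2) (C0 T \<times> C0 S) (C0 (T + S))"
proof (rule bij_betw_imageI)
  show "inj_on (\<lambda>(p1, p2). pconcat T S p1 p2) (C0 T \<times> C0 S)"
    using pconcat_inject[OF assms] by (auto intro!: inj_onI)
  show "(\<lambda>(p1, p2). pconcat T S p1 p2) ` (C0 T \<times> C0 S) = C0 (T + S)"
  proof
    show "(\<lambda>(p1, p2). pconcat T S p1 p2) ` (C0 T \<times> C0 S) \<subseteq> C0 (T + S)"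
      using pconcat_in_C0[OF assms] by auto
    show "C0 (T + S) \<subseteq> (\<lambda>(p1, p2). pconcat T S p1 p2) ` (C0 T \<times> C0 S)"
      using pconcat_split[OF assms] by (fastforce simp: image_iff)
  qed
qed

lemma exp_integral_pconcat_le:
  assumes "0 \<le> S" "t \<le> T"
  shows "exp_integral \<alpha> (pconcat T S p1 p2) t = exp_integral \<alpha> p1 t"
  unfolding exp_integral_def using assms by (intro integral_cong) (auto simp: pconcat_def)

lemma exp_integral_pconcat_ge:
  assumes "0 \<le> T" "0 \<le> S" "p1 \<in> C0 T" "p2 \<in> C0 S" "linear \<alpha>" "T \<le> t" "t \<le> T + S"
  shows "exp_integral \<alpha> (pconcat T S p1 p2) t
    = exp_integral \<alpha> p1 T + exp (- \<alpha> (p1 T)) * exp_integral \<alpha> p2 (t - T)"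
proof -
  define f where "f = (\<lambda>s. exp (- \<alpha> (pconcat T S p1 p2 s)))"
  have "continuous_on {0..T+S} f"
    unfolding f_def using assms
    by (intro continuous_on_exp_neg_linear continuous_on_pconcat) (auto simp: C0_def)
  then have "f integrable_on {0..t}"
    using assms by (intro integrable_continuous_interval) (auto elim: continuous_on_subset)
  then have "exp_integral \<alpha> (pconcat T S p1 p2) t = integral {0..T} f + integral {T..t} f"
    unfolding exp_integral_def f_def[symmetric] using assms
    by (intro Henstock_Kurzweil_Integration.integral_combine[symmetric]) auto
  moreover have "integral {0..T} f = exp_integral \<alpha> p1 T"
    using exp_integral_pconcat_le[OF assms(2), of T T] by (simp add: f_def exp_integral_def)
  moreover have "integral {T..t} f = integral {0..t-T} (\<lambda>u. f (T + u))"
    using integral_shift_Icc_real[of 0 "t - T" f T] by (simp add: add.commute o_def)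
  moreover have "f (T + u) = exp (- \<alpha> (p1 T)) * exp (- \<alpha> (p2 u))" if "u \<in> {0..t-T}" for u
  proof -
    have "pconcat T S p1 p2 (T + u) = p1 T + p2 u"
      using that assms by (auto simp: pconcat_def C0_def)
    then show ?thesis
      using assms(5) by (simp add: f_def linear_add exp_add[symmetric])
  qed
  then have "integral {0..t-T} (\<lambda>u. f (T + u))
      = integral {0..t-T} (\<lambda>u. exp (- \<alpha> (p1 T)) * exp (- \<alpha> (p2 u)))"
    by (rule integral_cong)
  ultimately show ?thesis
    unfolding exp_integral_def by (simp only: integral_mult_right)
qed

lemma exp_integral_pconcat_total:
  assumes "0 < T" "0 < S" "p1 \<in> C0 T" "p2 \<in> C0 S" "linear \<alpha>"
  shows "exp_integral \<alpha> (pconcat T S p1 p2) (T + S)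
    = exp (- \<alpha> (p1 T)) * (exp (cphi \<alpha> T p1) + exp (ceps \<alpha> S p2))"
proof -
  have "0 < exp_integral \<alpha> p1 T" "0 < exp_integral \<alpha> p2 S"
    using assms by (auto intro!: exp_integral_pos simp: C0_def)
  moreover have "exp (- \<alpha> (p1 T)) * exp (\<alpha> (p1 T)) = 1"
    by (simp add: exp_minus)
  ultimately show ?thesis
    using exp_integral_pconcat_ge[of T S p1 p2 \<alpha> "T + S"] assms
    by (simp add: cphi_def ceps_eq_ln_exp_integral exp_add distrib_left flip: mult.assoc)
qed

lemma ceps_pconcat:
  assumes "0 < T" "0 < S" "p1 \<in> C0 T" "p2 \<in> C0 S" "linear \<alpha>"
  shows "ceps \<alpha> (T + S) (pconcat T S p1 p2) = teps \<alpha> T S p1 p2"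
proof -
  have "0 < exp (cphi \<alpha> T p1) + exp (ceps \<alpha> S p2)"
    by (simp add: add_pos_pos)
  then show ?thesis
    using exp_integral_pconcat_total[OF assms]
    by (simp add: ceps_eq_ln_exp_integral[of _ "T + S"] ln_mult ln_exp_add_exp teps_def cphi_def)
qed

lemma cphi_pconcat:
  assumes "0 < T" "0 < S" "p1 \<in> C0 T" "p2 \<in> C0 S" "linear \<alpha>"
  shows "cphi \<alpha> (T + S) (pconcat T S p1 p2) = tphi \<alpha> T S p1 p2"
proof -
  have "pconcat T S p1 p2 (T + S) = p1 T + p2 S"
    using assms by (simp add: pconcat_def)
  then show ?thesis
    using ceps_pconcat[OF assms] assms(5)
    by (simp add: cphi_def[of _ "T + S"] tphi_def teps_def ln_one_plus_exp[of "cphi \<alpha> T p1 - _"]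
        linear_add) (simp add: cphi_def)
qed

lemma exp_integral_pconcat_ratio_le:
  assumes "0 < T" "0 < S" "p1 \<in> C0 T" "p2 \<in> C0 S" "linear \<alpha>" "t \<le> T"
  shows "exp_integral \<alpha> (pconcat T S p1 p2) t / exp_integral \<alpha> (pconcat T S p1 p2) (T + S)
    = exp (cphi \<alpha> T p1) / (exp (cphi \<alpha> T p1) + exp (ceps \<alpha> S p2))
      * (exp_integral \<alpha> p1 t / exp_integral \<alpha> p1 T)"
proof -
  let ?a = "\<alpha> (p1 T)" and ?x = "exp (cphi \<alpha> T p1)"
  have "0 < exp_integral \<alpha> p1 T"
    using assms by (auto intro!: exp_integral_pos simp: C0_def)
  moreover have "exp (- ?a) * exp ?a = 1"
    by (simp add: exp_minus)
  ultimately have "exp_integral \<alpha> (pconcat T S p1 p2) t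
      = exp (- ?a) * (?x * (exp_integral \<alpha> p1 t / exp_integral \<alpha> p1 T))"
    using exp_integral_pconcat_le[OF less_imp_le[OF assms(2)] assms(6), of \<alpha> p1 p2]
    by (simp add: cphi_def ceps_eq_ln_exp_integral exp_add flip: mult.assoc)
  then show ?thesis
    using exp_integral_pconcat_total[OF assms(1-5)] by simp
qed

lemma exp_integral_pconcat_ratio_ge:
  assumes "0 < T" "0 < S" "p1 \<in> C0 T" "p2 \<in> C0 S" "linear \<alpha>" "T \<le> t" "t \<le> T + S"
  shows "exp_integral \<alpha> (pconcat T S p1 p2) t / exp_integral \<alpha> (pconcat T S p1 p2) (T + S)
    = (exp (cphi \<alpha> T p1) + exp (ceps \<alpha> S p2) * (exp_integral \<alpha> p2 (t - T) / exp_integral \<alpha> p2 S))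
      / (exp (cphi \<alpha> T p1) + exp (ceps \<alpha> S p2))"
proof -
  let ?a = "\<alpha> (p1 T)" and ?x = "exp (cphi \<alpha> T p1)" and ?y = "exp (ceps \<alpha> S p2)"
  have "0 < exp_integral \<alpha> p1 T" "0 < exp_integral \<alpha> p2 S"
    using assms by (auto intro!: exp_integral_pos simp: C0_def)
  moreover have "exp (- ?a) * exp ?a = 1"
    by (simp add: exp_minus)
  ultimately have "exp_integral \<alpha> (pconcat T S p1 p2) t
      = exp (- ?a) * (?x + ?y * (exp_integral \<alpha> p2 (t - T) / exp_integral \<alpha> p2 S))"
    using exp_integral_pconcat_ge[OF less_imp_le[OF assms(1)] less_imp_le[OF assms(2)] assms(3-7)]
    by (simp add: cphi_def ceps_eq_ln_exp_integral exp_add distrib_left flip: mult.assoc)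
  then show ?thesis
    using exp_integral_pconcat_total[OF assms(1-5)] by simp
qed

lemma cact_pconcat_apply_le:
  fixes x y :: real
  assumes "0 < T" "0 < S" "p1 \<in> C0 T" "p2 \<in> C0 S" "linear \<alpha>" "t \<in> {0..T}"
    and x: "x = exp (cphi \<alpha> T p1)" and y: "y = exp (ceps \<alpha> S p2)"
  shows "cact \<alpha> av (T + S) c (pconcat T S p1 p2) t
    = cact \<alpha> av T (ln ((exp c * x + y) / (x + y))) p1 t"
proof -
  let ?F = "exp_integral \<alpha> (pconcat T S p1 p2)" and ?F1 = "exp_integral \<alpha> p1"
  have pos: "0 < ?F (T + S)" "0 < ?F1 T" "0 < x" "0 < y"
    using assms exp_integral_pconcat_total[OF assms(1-5)]
    by (auto intro!: exp_integral_pos add_pos_pos mult_pos_pos simp: C0_def)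
  then have "0 < (exp c * x + y) / (x + y)"
    by (intro divide_pos_pos add_pos_pos) auto
  then have q1: "exp (ln ((exp c * x + y) / (x + y))) - 1 = (exp c - 1) * (x / (x + y))"
    using pos by (simp add: field_simps)
  have "cact \<alpha> av (T + S) c (pconcat T S p1 p2) t
      = p1 t + ln (1 + (exp c - 1) * (?F t / ?F (T + S))) *\<^sub>R av"
    using assms(1,2,6) pos by (simp add: cact_apply pconcat_apply_le)
  also have "\<dots> = p1 t + ln (1 + (exp c - 1) * (x / (x + y)) * (?F1 t / ?F1 T)) *\<^sub>R av"
    using exp_integral_pconcat_ratio_le[OF assms(1-5)] assms(6) by (simp add: x y mult.assoc)
  also have "\<dots> = cact \<alpha> av T (ln ((exp c * x + y) / (x + y))) p1 t"
    using assms(6) pos by (simp add: cact_apply q1)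
  finally show ?thesis .
qed

lemma cact_pconcat_apply_ge:
  fixes x y :: real
  assumes "0 < T" "0 < S" "p1 \<in> C0 T" "p2 \<in> C0 S" "linear \<alpha>" "T < t" "t \<le> T + S"
    and x: "x = exp (cphi \<alpha> T p1)" and y: "y = exp (ceps \<alpha> S p2)"
  shows "cact \<alpha> av (T + S) c (pconcat T S p1 p2) t
    = cact \<alpha> av T (ln ((exp c * x + y) / (x + y))) p1 T
      + cact \<alpha> av S (ln ((x + y) / (x + y / exp c))) p2 (t - T)"
proof -
  let ?F = "exp_integral \<alpha> (pconcat T S p1 p2)" and ?F2 = "exp_integral \<alpha> p2"
  let ?q1 = "(exp c * x + y) / (x + y)" and ?q2 = "(x + y) / (x + y / exp c)"
  let ?r = "?F2 (t - T) / ?F2 S"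
  have pos: "0 < ?F (T + S)" "0 < exp_integral \<alpha> p1 T" "0 < ?F2 S" "0 < x" "0 < y"
    using assms exp_integral_pconcat_total[OF assms(1-5)]
    by (auto intro!: exp_integral_pos add_pos_pos mult_pos_pos simp: C0_def)
  then have exp_q: "exp (ln ?q1) = ?q1" "exp (ln ?q2) = ?q2"
    by (auto intro!: divide_pos_pos add_pos_pos)
  have "0 \<le> ?r" "?r \<le> 1"
    using assms pos exp_integral_bounds[of "t - T" S p2 \<alpha>] by (auto simp: C0_def)
  then have split: "ln (1 + (exp c - 1) * ((x + y * ?r) / (x + y))) = ln ?q1 + ln (1 + (?q2 - 1) * ?r)"
    using pos by (intro ln_tensor_action_factor[symmetric]) auto
  have "cact \<alpha> av (T + S) c (pconcat T S p1 p2) t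
      = p1 T + p2 (t - T) + ln (1 + (exp c - 1) * (?F t / ?F (T + S))) *\<^sub>R av"
    using assms(1,6,7) pos by (simp add: cact_apply pconcat_apply_ge)
  also have "\<dots> = p1 T + p2 (t - T) + (ln ?q1 + ln (1 + (?q2 - 1) * ?r)) *\<^sub>R av"
    using exp_integral_pconcat_ratio_ge[OF assms(1-5)] assms(6,7) split by (simp add: x y)
  also have "\<dots> = cact \<alpha> av T (ln ?q1) p1 T + cact \<alpha> av S (ln ?q2) p2 (t - T)"
    using assms(1,6,7) pos by (simp add: cact_apply exp_q scaleR_add_left)
  finally show ?thesis .
qed

lemma cact_pconcat:
  assumes "0 < T" "0 < S" "p1 \<in> C0 T" "p2 \<in> C0 S" "linear \<alpha>"
  shows "cact \<alpha> av (T + S) c (pconcat T S p1 p2)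
    = (\<lambda>(q1, q2). pconcat T S q1 q2) (tact \<alpha> av T S c p1 p2)"
proof
  fix t
  consider "t \<notin> {0..T+S}" | "t \<in> {0..T}" | "T < t" "t \<le> T + S"
    using assms by fastforce
  then show "cact \<alpha> av (T + S) c (pconcat T S p1 p2) t
      = ((\<lambda>(q1, q2). pconcat T S q1 q2) (tact \<alpha> av T S c p1 p2)) t"
  proof cases
    case 1
    then show ?thesis by (simp add: cact_def pconcat_def tact_eq del: atLeastAtMost_iff)
  next
    case 2
    then show ?thesis
      using assms by (simp add: cact_pconcat_apply_le tact_eq pconcat_apply_le)
  next
    case 3
    then show ?thesis
      using assms by (simp add: cact_pconcat_apply_ge tact_eq pconcat_apply_ge)
  qed
qed

theorem mainTheorem3:
  fixes T S :: real and \<alpha> :: "'a::euclidean_space \<Rightarrow> real" and av :: 'a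
  assumes "T > 0" and "S > 0"
    and "linear \<alpha>" and "\<alpha> av = 2"
  shows "bij_betw (\<lambda>(p1 :: real \<Rightarrow> 'a, p2). pconcat T S p1 p2) (C0 T \<times> C0 S) (C0 (T + S))
    \<and> (\<forall>p1\<in>C0 T. \<forall>p2\<in>C0 S.
         cgamma (T + S) (pconcat T S p1 p2) = tgamma T S p1 p2
       \<and> ceps \<alpha> (T + S) (pconcat T S p1 p2) = teps \<alpha> T S p1 p2
       \<and> cphi \<alpha> (T + S) (pconcat T S p1 p2) = tphi \<alpha> T S p1 p2
       \<and> (\<forall>c::real. cact \<alpha> av (T + S) c (pconcat T S p1 p2)
              = (\<lambda>(q1, q2). pconcat T S q1 q2) (tact \<alpha> av T S c p1 p2)))"
proof (intro conjI ballI allI)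
  show "bij_betw (\<lambda>(p1 :: real \<Rightarrow> 'a, p2). pconcat T S p1 p2) (C0 T \<times> C0 S) (C0 (T + S))"
    using assms by (intro bij_betw_pconcat) auto
  fix p1 p2 :: "real \<Rightarrow> 'a" and c :: real
  assume p: "p1 \<in> C0 T" "p2 \<in> C0 S"
  show "cgamma (T + S) (pconcat T S p1 p2) = tgamma T S p1 p2"
    using assms by (simp add: cgamma_def tgamma_def pconcat_def)
  show "ceps \<alpha> (T + S) (pconcat T S p1 p2) = teps \<alpha> T S p1 p2"
    using ceps_pconcat assms p by blast
  show "cphi \<alpha> (T + S) (pconcat T S p1 p2) = tphi \<alpha> T S p1 p2"
    using cphi_pconcat assms p by blast
  show "cact \<alpha> av (T + S) c (pconcat T S p1 p2)
      = (\<lambda>(q1, q2). pconcat T S q1 q2) (tact \<alpha> av T S c p1 p2)"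
    using cact_pconcat assms p by blast
qed

end
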